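(* Let $m_1,m_2,n_1\in\mathbb Z_+$. Then $$|\mathcal T(m_1,m_2,n_1)|=|\mathcal T(m_1-1,m_2,n_1-1)|+|\mathcal T^1(m_1+1,m_2-1,n_1-1)|+|\mathcal T^2(m_1-1,m_2,n_1-1)|+|\mathcal T^3(m_1,m_2,n_1)|.$$
   Context: (Type $G_2$ with $\mu(h_2)=0$: here $m_i=\lambda(h_i)$, $n_1=\mu(h_1)$, and shifting $\lambda\mapsto\lambda\pm\varpi_i$, $\mu\mapsto\mu-\varpi_1$ shifts the parameters accordingly.) For arbitrary integers $m_1,m_2,n_1$ define: $\mathcal T(m_1,m_2,n_1)=\{(a,b,c,d,e,f)\in\mathbb Z_+^6: a+b+c+d+e+f\le n_1,\ c\le1,\ b+e-d\le m_2,\ f\le m_1,\ e\le m_2,\ a-2b+2d-e+f\le m_1,\ c+f+2d-e\le m_1\}$; $\mathcal T^1(m_1,m_2,n_1)=\{(a,b,c,d,e)\in\mathbb Z_+^5: a+b+c+d+e\le n_1,\ c\le1,\ b+e-d\le m_2,\ e\le m_2,\ a-2b+2d-e\le m_1,\ c+2d-e\le m_1\}$; $\mathcal T^2(m_1,m_2,n_1)=\{(a,b,c,y)\in\mathbb Z_+^4: a+2b+c+y\le n_1+m_2,\ c\le1,\ a+2y\le m_1+2m_2,\ c+2b+2y\le m_1+2m_2,\ y+b\ge m_2\}$; $\mathcal T^3(m_1,m_2,n_1)=\{(a,b,c,y)\in\mathcal T^2(m_1,m_2,n_1): a=0\ \text{or}\ c+2b+2y=m_1+2m_2\}$. *)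

theory Defs
  imports Main
begin

definition T6 :: "int \<Rightarrow> int \<Rightarrow> int \<Rightarrow> (int \<times> int \<times> int \<times> int \<times> int \<times> int) set" where
  "T6 m1 m2 n1 = {(a,b,c,d,e,f). 0 \<le> a \<and> 0 \<le> b \<and> 0 \<le> c \<and> 0 \<le> d \<and> 0 \<le> e \<and> 0 \<le> f \<and>
     a+b+c+d+e+f \<le> n1 \<and> c \<le> 1 \<and> b+e-d \<le> m2 \<and> f \<le> m1 \<and> e \<le> m2 \<and>
     a-2*b+2*d-e+f \<le> m1 \<and> c+f+2*d-e \<le> m1}"

definition T1 :: "int \<Rightarrow> int \<Rightarrow> int \<Rightarrow> (int \<times> int \<times> int \<times> int \<times> int) set" where
  "T1 m1 m2 n1 = {(a,b,c,d,e). 0 \<le> a \<and> 0 \<le> b \<and> 0 \<le> c \<and> 0 \<le> d \<and> 0 \<le> e \<and>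
     a+b+c+d+e \<le> n1 \<and> c \<le> 1 \<and> b+e-d \<le> m2 \<and> e \<le> m2 \<and>
     a-2*b+2*d-e \<le> m1 \<and> c+2*d-e \<le> m1}"

definition T2 :: "int \<Rightarrow> int \<Rightarrow> int \<Rightarrow> (int \<times> int \<times> int \<times> int) set" where
  "T2 m1 m2 n1 = {(a,b,c,y). 0 \<le> a \<and> 0 \<le> b \<and> 0 \<le> c \<and> 0 \<le> y \<and>
     a+2*b+c+y \<le> n1+m2 \<and> c \<le> 1 \<and> a+2*y \<le> m1+2*m2 \<and> c+2*b+2*y \<le> m1+2*m2 \<and> y+b \<ge> m2}"

definition T3 :: "int \<Rightarrow> int \<Rightarrow> int \<Rightarrow> (int \<times> int \<times> int \<times> int) set" where
  "T3 m1 m2 n1 = {(a,b,c,y) \<in> T2 m1 m2 n1. a = 0 \<or> c+2*b+2*y = m1+2*m2}"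

end

theory Submission
  imports Defs
begin

text \<open>Each of the three summands on the right is split off by peeling one coordinate of the
  lattice points: splitting \<open>\<T>\<close> at \<open>f = 0\<close> leaves \<open>\<T>(m\<^sub>1-1,m\<^sub>2,n\<^sub>1-1)\<close> (for \<open>f > 0\<close>,
  shifted down) and \<open>\<T>\<^sup>1(m\<^sub>1,m\<^sub>2,n\<^sub>1)\<close>; splitting \<open>\<T>\<^sup>1\<close> at \<open>e = 0\<close> leaves
  \<open>\<T>\<^sup>1(m\<^sub>1+1,m\<^sub>2-1,n\<^sub>1-1)\<close> and \<open>\<T>\<^sup>2(m\<^sub>1,m\<^sub>2,n\<^sub>1)\<close> after the substitution \<open>y = d + m\<^sub>2 - b\<close>;
  finally \<open>\<T>\<^sup>2\<close> minus \<open>\<T>\<^sup>3\<close> is \<open>\<T>\<^sup>2(m\<^sub>1-1,m\<^sub>2,n\<^sub>1-1)\<close> shifted by one in \<open>a\<close>.\<close>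

lemma card_partition_bij_betw:
  assumes "finite A"
    and "bij_betw f B {x \<in> A. P x}" and "bij_betw g C {x \<in> A. \<not> P x}"
  shows "card A = card B + card C"
proof -
  have "A = {x \<in> A. P x} \<union> {x \<in> A. \<not> P x}" by blast
  then have "card A = card {x \<in> A. P x} + card {x \<in> A. \<not> P x}"
    using \<open>finite A\<close> by (metis (no_types, lifting) card_Un_disjoint disjoint_iff
        finite_Un mem_Collect_eq)
  then show ?thesis
    using assms(2,3) by (simp add: bij_betw_same_card)
qed

lemma finite_T6: "finite (T6 m1 m2 n1)"
proof (rule finite_subset)
  show "T6 m1 m2 n1 \<subseteq> {0..n1} \<times> {0..n1} \<times> {0..n1} \<times> {0..n1} \<times> {0..n1} \<times> {0..n1}"
    unfolding T6_def by auto
qed simp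

lemma finite_T1: "finite (T1 m1 m2 n1)"
proof (rule finite_subset)
  show "T1 m1 m2 n1 \<subseteq> {0..n1} \<times> {0..n1} \<times> {0..n1} \<times> {0..n1} \<times> {0..n1}"
    unfolding T1_def by auto
qed simp

lemma finite_T2: "finite (T2 m1 m2 n1)"
proof (rule finite_subset)
  show "T2 m1 m2 n1 \<subseteq> {0..n1+m2} \<times> {0..n1+m2} \<times> {0..n1+m2} \<times> {0..n1+m2}"
    unfolding T2_def by auto
qed simp

lemma T3_subset_T2: "T3 m1 m2 n1 \<subseteq> T2 m1 m2 n1"
  unfolding T3_def by auto

lemma card_T6_split_last:
  assumes "0 \<le> m1"
  shows "card (T6 m1 m2 n1) = card (T6 (m1-1) m2 (n1-1)) + card (T1 m1 m2 n1)"
proof (rule card_partition_bij_betw[OF finite_T6, where P = "\<lambda>(a,b,c,d,e,f). f \<noteq> 0"])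
  show "bij_betw (\<lambda>(a,b,c,d,e,f). (a,b,c,d,e,f+1)) (T6 (m1-1) m2 (n1-1))
      {x \<in> T6 m1 m2 n1. case x of (a,b,c,d,e,f) \<Rightarrow> f \<noteq> 0}"
    by (rule bij_betw_byWitness[where f' = "\<lambda>(a,b,c,d,e,f). (a,b,c,d,e,f-1)"])
      (use assms in \<open>auto simp: T6_def\<close>)
  show "bij_betw (\<lambda>(a,b,c,d,e). (a,b,c,d,e,0)) (T1 m1 m2 n1)
      {x \<in> T6 m1 m2 n1. \<not> (case x of (a,b,c,d,e,f) \<Rightarrow> f \<noteq> 0)}"
    by (rule bij_betw_byWitness[where f' = "\<lambda>(a,b,c,d,e,f). (a,b,c,d,e)"])
      (use assms in \<open>auto simp: T6_def T1_def\<close>)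
qed

lemma card_T1_split_last:
  assumes "0 \<le> m2"
  shows "card (T1 m1 m2 n1) = card (T1 (m1+1) (m2-1) (n1-1)) + card (T2 m1 m2 n1)"
proof (rule card_partition_bij_betw[OF finite_T1, where P = "\<lambda>(a,b,c,d,e). e \<noteq> 0"])
  show "bij_betw (\<lambda>(a,b,c,d,e). (a,b,c,d,e+1)) (T1 (m1+1) (m2-1) (n1-1))
      {x \<in> T1 m1 m2 n1. case x of (a,b,c,d,e) \<Rightarrow> e \<noteq> 0}"
    by (rule bij_betw_byWitness[where f' = "\<lambda>(a,b,c,d,e). (a,b,c,d,e-1)"])
      (use assms in \<open>auto simp: T1_def\<close>)
  show "bij_betw (\<lambda>(a,b,c,y). (a,b,c,y+b-m2,0)) (T2 m1 m2 n1)
      {x \<in> T1 m1 m2 n1. \<not> (case x of (a,b,c,d,e) \<Rightarrow> e \<noteq> 0)}"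
    by (rule bij_betw_byWitness[where f' = "\<lambda>(a,b,c,d,e). (a,b,c,d+m2-b)"])
      (use assms in \<open>auto simp: T1_def T2_def\<close>)
qed

lemma card_T2_split_first:
  "card (T2 m1 m2 n1) = card (T2 (m1-1) m2 (n1-1)) + card (T3 m1 m2 n1)"
proof (rule card_partition_bij_betw[OF finite_T2, where P = "\<lambda>x. x \<notin> T3 m1 m2 n1"])
  show "bij_betw (\<lambda>(a,b,c,y). (a+1,b,c,y)) (T2 (m1-1) m2 (n1-1))
      {x \<in> T2 m1 m2 n1. x \<notin> T3 m1 m2 n1}"
    by (rule bij_betw_byWitness[where f' = "\<lambda>(a,b,c,y). (a-1,b,c,y)"])
      (auto simp: T3_def T2_def)
  have "{x \<in> T2 m1 m2 n1. \<not> x \<notin> T3 m1 m2 n1} = T3 m1 m2 n1"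
    using T3_subset_T2 by blast
  then show "bij_betw id (T3 m1 m2 n1) {x \<in> T2 m1 m2 n1. \<not> x \<notin> T3 m1 m2 n1}"
    by simp
qed

theorem lemma6p4:
  fixes m1 m2 n1 :: int
  assumes "0 \<le> m1" and "0 \<le> m2" and "0 \<le> n1"
  shows "card (T6 m1 m2 n1) = card (T6 (m1-1) m2 (n1-1)) + card (T1 (m1+1) (m2-1) (n1-1))
           + card (T2 (m1-1) m2 (n1-1)) + card (T3 m1 m2 n1)"
  using card_T6_split_last[OF assms(1)] card_T1_split_last[OF assms(2), of m1 n1]
    card_T2_split_first[of m1 m2 n1]
  by simp

end
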